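(* Let $d\ge 3$. For $1\le i\le d$ let $h_i=a_1a_2\cdots a_{i-1}a_ia_{i-1}\cdots a_3a_2$ (so $h_1=a_1$, $h_2=a_1a_2$, $h_3=a_1a_2a_3a_2$, etc.). Then $h_i$ has infinite order in $G_d$ for every $1\le i\le d$.
   Context: Let $d\ge 3$, $X=\{1,\dots,d\}$, $T$ the $d$-regular rooted tree with vertex set $X^*$. $\mathrm{Aut}(T)$ is the group of root-preserving automorphisms with product left-to-right: $(gh)(u)=h(g(u))$. Sections $g|_u$ are defined by $g(uv)=g(u)\,g|_u(v)$; we write $g=(g|_1,\dots,g|_d)\lambda_g$ with $\lambda_g\in S_d$ the action on the first level; $e$ is the identity; $\overline{j}\in\{1,\dots,d\}$ denotes $j$ mod $d$. $G_d=\langle a_1,\dots,a_d\rangle\le\mathrm{Aut}(T)$ where $a_i$ acts on the first level as $(i\ \overline{i+1})$, with $a_i|_i=a_i$, $a_i|_{\overline{i+1}}=a_{\overline{i+1}}$, and $a_i|_x=e$ otherwise. *)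

theory Defs
  imports Main
begin

text \<open>The alphabet is X = {1..d}; the tree T has vertex set X^*, modelled as
  lists of naturals with entries in {1..d}. Tree automorphisms are modelled by
  their action on words.\<close>

definition nxt :: "nat \<Rightarrow> nat \<Rightarrow> nat" where
  "nxt d i = (i mod d) + 1"

text \<open>The generator a_i: on the first level it swaps i and i+1 (mod d), with
  section a_i at i, section a_{i+1} at i+1, and trivial sections elsewhere.\<close>
fun gen :: "nat \<Rightarrow> nat \<Rightarrow> nat list \<Rightarrow> nat list" where
  "gen d i [] = []"
| "gen d i (x # w) =
     (if x = i then nxt d i # gen d i w
      else if x = nxt d i then i # gen d (nxt d i) w
      else x # w)"

text \<open>Action of the product g_1 g_2 ... g_k of generators a_{g_1}, ..., a_{g_k},
  using the left-to-right convention (gh)(u) = h(g(u)): a_{g_1} is applied first.\<close>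
definition word_act :: "nat \<Rightarrow> nat list \<Rightarrow> nat list \<Rightarrow> nat list" where
  "word_act d js u = fold (gen d) js u"

definition h_word :: "nat \<Rightarrow> nat list" where
  "h_word i = [1..<i] @ [i] @ rev [2..<i]"

definition infinite_order :: "nat \<Rightarrow> (nat list \<Rightarrow> nat list) \<Rightarrow> bool" where
  "infinite_order d g \<longleftrightarrow>
     (\<forall>n::nat. n \<ge> 1 \<longrightarrow> (\<exists>u \<in> lists {1..d}. (g ^^ n) u \<noteq> u))"

end

theory Submission
  imports Defs
begin

text \<open>A tree automorphism g has no trivial power g^n with 0 < n < k L as soon as some
  first-level vertex x has a g-orbit of length k and the section of g^k at x has no trivial
  power below L. For 2 \<le> i < d, h_i permutes 1, i+1, 2 cyclically and the section of h_i^3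
  at 1 is h_{i+1}; h_d fixes 3 with section a_3 a_2; and (a_3 a_2)^3 fixes 2 with section
  a_2 a_3 a_4 a_3 (indices mod d), the image of h_3 under the rotation x \<mapsto> x + 1 of the
  alphabet, which conjugates a_i to a_{i+1}. One turn around the cycle
  h_3, h_4, ..., h_d, a_3 a_2, h_3 thus triples the bound for h_3, so no power of h_3, and hence
  none of h_d, ..., h_2, is trivial. Finally, the section of a_1^2 at 1 is a_1 a_2 = h_2.\<close>

definition nontrivial_powers_below :: "nat \<Rightarrow> (nat list \<Rightarrow> nat list) \<Rightarrow> nat \<Rightarrow> bool" where
  "nontrivial_powers_below d g L \<longleftrightarrow>
     (\<forall>n. 1 \<le> n \<longrightarrow> n < L \<longrightarrow> (\<exists>u \<in> lists {1..d}. (g ^^ n) u \<noteq> u))"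

lemma nontrivial_powers_below_mono:
  "nontrivial_powers_below d g L \<Longrightarrow> L' \<le> L \<Longrightarrow> nontrivial_powers_below d g L'"
  unfolding nontrivial_powers_below_def by auto

lemma nontrivial_powers_below_1: "nontrivial_powers_below d g 1"
  unfolding nontrivial_powers_below_def by auto

lemma infinite_order_iff_nontrivial_powers_below:
  "infinite_order d g \<longleftrightarrow> (\<forall>L. nontrivial_powers_below d g L)"
  unfolding infinite_order_def nontrivial_powers_below_def by (meson lessI less_imp_le)

lemma funpow_mult_Cons:
  assumes "\<And>w. (g ^^ k) (x # w) = x # f w"
  shows "(g ^^ (k * m)) (x # w) = x # (f ^^ m) w"
proof (induction m arbitrary: w)
  case 0 then show ?case by simp
next
  case (Suc m)
  have "g ^^ (k * Suc m) = (g ^^ k) \<circ> (g ^^ (k * m))"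
    by (simp add: funpow_add)
  then show ?case using Suc assms by (simp add: funpow_swap1)
qed

lemma nontrivial_powers_below_section:
  assumes x: "x \<in> {1..d}" and k: "k \<ge> 1"
    and sect: "\<And>w. (g ^^ k) (x # w) = x # f w"
    and orbit: "\<And>j w w'. 0 < j \<Longrightarrow> j < k \<Longrightarrow> (g ^^ j) (x # w) \<noteq> x # w'"
    and f: "nontrivial_powers_below d f L"
  shows "nontrivial_powers_below d g (k * L)"
  unfolding nontrivial_powers_below_def
proof (intro allI impI)
  fix n assume n1: "1 \<le> n" and nL: "n < k * L"
  show "\<exists>u\<in>lists {1..d}. (g ^^ n) u \<noteq> u"
  proof (cases "n mod k = 0")
    case True
    then obtain m where nm: "n = k * m" by auto
    with n1 have "1 \<le> m" by (cases m) auto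
    moreover from nL nm k have "m < L" by simp
    ultimately obtain w where w: "w \<in> lists {1..d}" "(f ^^ m) w \<noteq> w"
      using f unfolding nontrivial_powers_below_def by blast
    have "(g ^^ n) (x # w) = x # (f ^^ m) w" using nm funpow_mult_Cons[OF sect] by simp
    with w x show ?thesis by (intro bexI[of _ "x # w"]) auto
  next
    case False
    have "n = n mod k + k * (n div k)" by simp
    then have "(g ^^ n) [x] = (g ^^ (n mod k)) ((g ^^ (k * (n div k))) [x])"
      by (metis funpow_add comp_apply)
    also have "\<dots> = (g ^^ (n mod k)) (x # (f ^^ (n div k)) [])"
      using funpow_mult_Cons[OF sect] by simp
    finally have "(g ^^ n) [x] \<noteq> [x]" using orbit False k by simp
    with x show ?thesis by (intro bexI[of _ "[x]"]) auto
  qed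
qed

lemma nontrivial_powers_below_conj:
  assumes inj: "inj_on \<sigma> {1..d}" and \<sigma>: "\<sigma> ` {1..d} \<subseteq> {1..d}"
    and g: "\<And>u. u \<in> lists {1..d} \<Longrightarrow> g u \<in> lists {1..d}"
    and conj: "\<And>u. u \<in> lists {1..d} \<Longrightarrow> g' (map \<sigma> u) = map \<sigma> (g u)"
    and "nontrivial_powers_below d g L"
  shows "nontrivial_powers_below d g' L"
  unfolding nontrivial_powers_below_def
proof (intro allI impI)
  have pow: "(g' ^^ n) (map \<sigma> u) = map \<sigma> ((g ^^ n) u) \<and> (g ^^ n) u \<in> lists {1..d}"
    if "u \<in> lists {1..d}" for n u
    using that
  proof (induction n)
    case (Suc n)
    then have "(g' ^^ n) (map \<sigma> u) = map \<sigma> ((g ^^ n) u)" "(g ^^ n) u \<in> lists {1..d}" by blast+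
    then show ?case using g conj by simp
  qed simp
  have inj_map: "inj_on (map \<sigma>) (lists {1..d})"
    by (rule inj_on_mapI, rule inj_on_subset[OF inj]) auto
  fix n assume "1 \<le> n" "n < L"
  then obtain u where u: "u \<in> lists {1..d}" "(g ^^ n) u \<noteq> u"
    using assms(5) unfolding nontrivial_powers_below_def by blast
  have pow_u: "(g' ^^ n) (map \<sigma> u) = map \<sigma> ((g ^^ n) u)" "(g ^^ n) u \<in> lists {1..d}"
    using pow[OF u(1)] by blast+
  have "(g' ^^ n) (map \<sigma> u) \<noteq> map \<sigma> u"
  proof
    assume "(g' ^^ n) (map \<sigma> u) = map \<sigma> u"
    then have "map \<sigma> ((g ^^ n) u) = map \<sigma> u" by (simp only: pow_u(1))
    with inj_map have "(g ^^ n) u = u" using pow_u(2) u(1) by (rule inj_onD)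
    with u(2) show False ..
  qed
  moreover have "map \<sigma> u \<in> lists (\<sigma> ` {1..d})"
    unfolding lists_image using u(1) by (rule imageI)
  then have "map \<sigma> u \<in> lists {1..d}" by (rule subsetD[OF lists_mono[OF \<sigma>]])
  ultimately show "\<exists>u\<in>lists {1..d}. (g' ^^ n) u \<noteq> u" by blast
qed

lemma word_act_Nil [simp]: "word_act d [] u = u"
  by (simp add: word_act_def)

lemma word_act_Cons [simp]: "word_act d (j # js) u = word_act d js (gen d j u)"
  by (simp add: word_act_def)

lemma word_act_append [simp]: "word_act d (js @ ks) u = word_act d ks (word_act d js u)"
  by (simp add: word_act_def)

lemma nxt_less: "j < d \<Longrightarrow> nxt d j = Suc j"
  unfolding nxt_def by simp

lemma word_act_Cons_fixed:
  "\<forall>j\<in>set js. x \<noteq> j \<and> x \<noteq> nxt d j \<Longrightarrow> word_act d js (x # w) = x # w"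
  by (induction js) auto

lemma word_act_upt_Cons:
  "a \<le> b \<Longrightarrow> b \<le> d \<Longrightarrow> word_act d [a..<b] (a # w) = b # word_act d [a..<b] w"
proof (induction b arbitrary: w rule: dec_induct)
  case base then show ?case by simp
next
  case (step b)
  then show ?case by (simp add: nxt_less)
qed

lemma word_act_rev_upt_Cons:
  "a \<le> b \<Longrightarrow> b < d \<Longrightarrow>
   word_act d (rev [a..<b]) (b # w) = a # word_act d (map Suc (rev [a..<b])) w"
proof (induction b arbitrary: w rule: dec_induct)
  case base then show ?case by simp
next
  case (step b)
  then show ?case by (simp add: nxt_less)
qed

lemma nxt_in_range: "1 \<le> d \<Longrightarrow> nxt d i \<in> {1..d}"
  unfolding nxt_def by (simp add: Suc_leI)

lemma nxt_eq: "x \<in> {1..d} \<Longrightarrow> nxt d x = (if x = d then 1 else Suc x)"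
  unfolding nxt_def by auto

lemma inj_on_nxt: "inj_on (nxt d) {1..d}"
proof (rule inj_onI)
  fix x y assume x: "x \<in> {1..d}" and y: "y \<in> {1..d}" and "nxt d x = nxt d y"
  then have "(if x = d then 1 else Suc x) = (if y = d then 1 else Suc y)"
    using nxt_eq[OF x] nxt_eq[OF y] by (simp only:)
  then show "x = y" using x y by (cases "x = d"; cases "y = d") auto
qed

lemma gen_lists:
  "1 \<le> d \<Longrightarrow> i \<in> {1..d} \<Longrightarrow> w \<in> lists {1..d} \<Longrightarrow> gen d i w \<in> lists {1..d}"
proof (induction w arbitrary: i)
  case (Cons x w)
  have "nxt d i \<in> {1..d}" using Cons.prems(1) by (rule nxt_in_range)
  moreover have "w \<in> lists {1..d}" using Cons.prems(3) by simp
  ultimately have "gen d i w \<in> lists {1..d}" "gen d (nxt d i) w \<in> lists {1..d}"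
    using Cons.IH Cons.prems(1,2) by blast+
  then show ?case using Cons.prems \<open>nxt d i \<in> {1..d}\<close> by simp
qed simp

lemma gen_map_nxt:
  assumes "1 \<le> d" "i \<in> {1..d}" "w \<in> lists {1..d}"
  shows "gen d (nxt d i) (map (nxt d) w) = map (nxt d) (gen d i w)"
  using assms
proof (induction w arbitrary: i)
  case Nil then show ?case by simp
next
  case (Cons x w)
  have ni: "nxt d i \<in> {1..d}" using Cons.prems(1) by (rule nxt_in_range)
  have x: "x \<in> {1..d}" and w: "w \<in> lists {1..d}" using Cons.prems(3) by auto
  have "nxt d x = nxt d i \<longleftrightarrow> x = i" "nxt d x = nxt d (nxt d i) \<longleftrightarrow> x = nxt d i"
    using x ni Cons.prems(2) inj_on_eq_iff[OF inj_on_nxt] by blast+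
  moreover have "gen d (nxt d i) (map (nxt d) w) = map (nxt d) (gen d i w)"
    "gen d (nxt d (nxt d i)) (map (nxt d) w) = map (nxt d) (gen d (nxt d i) w)"
    using Cons.IH Cons.prems(1,2) ni w by blast+
  ultimately show ?case by simp
qed

lemma word_act_lists:
  "1 \<le> d \<Longrightarrow> js \<in> lists {1..d} \<Longrightarrow> u \<in> lists {1..d} \<Longrightarrow>
   word_act d js u \<in> lists {1..d}"
proof (induction js arbitrary: u)
  case (Cons j js)
  have "j \<in> {1..d}" "js \<in> lists {1..d}" using Cons.prems(2) by simp_all
  with Cons.prems(1,3) have "gen d j u \<in> lists {1..d}" "js \<in> lists {1..d}"
    using gen_lists by blast+
  then show ?case using Cons.IH Cons.prems(1) by simp
qed simp

lemma word_act_map_nxt: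
  "1 \<le> d \<Longrightarrow> js \<in> lists {1..d} \<Longrightarrow> u \<in> lists {1..d} \<Longrightarrow>
   word_act d (map (nxt d) js) (map (nxt d) u) = map (nxt d) (word_act d js u)"
proof (induction js arbitrary: u)
  case (Cons j js)
  have "j \<in> {1..d}" "js \<in> lists {1..d}" using Cons.prems(2) by simp_all
  with Cons.prems(1,3) have "gen d j u \<in> lists {1..d}" "js \<in> lists {1..d}"
      and "gen d (nxt d j) (map (nxt d) u) = map (nxt d) (gen d j u)"
    using gen_lists gen_map_nxt by blast+
  then show ?case using Cons.IH Cons.prems(1) by simp
qed simp

lemma nontrivial_powers_below_map_nxt:
  assumes d: "1 \<le> d" and js: "js \<in> lists {1..d}"
    and "nontrivial_powers_below d (word_act d js) L"
  shows "nontrivial_powers_below d (word_act d (map (nxt d) js)) L"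
proof (rule nontrivial_powers_below_conj[OF inj_on_nxt])
  show "nxt d ` {1..d} \<subseteq> {1..d}" using nxt_in_range[OF d] by blast
  show "word_act d js u \<in> lists {1..d}" if "u \<in> lists {1..d}" for u
    using word_act_lists[OF d js that] .
  show "word_act d (map (nxt d) js) (map (nxt d) u) = map (nxt d) (word_act d js u)"
    if "u \<in> lists {1..d}" for u
    using word_act_map_nxt[OF d js that] .
qed fact

lemma h_word_Cons_1:
  assumes "2 \<le> i" "i < d"
  shows "word_act d (h_word i) (1 # w) = Suc i # word_act d [1..<Suc i] w"
proof -
  have "word_act d [1..<i] (1 # w) = i # word_act d [1..<i] w"
    using assms by (intro word_act_upt_Cons) auto
  moreover have "nxt d i = Suc i" using assms by (simp add: nxt_less)
  moreover have "word_act d (rev [2..<i]) (Suc i # v) = Suc i # v" for v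
    using assms by (intro word_act_Cons_fixed) (auto simp: nxt_less)
  ultimately show ?thesis unfolding h_word_def using assms by simp
qed

lemma h_word_Cons_Suc:
  assumes "2 \<le> i" "i < d"
  shows "word_act d (h_word i) (Suc i # w) = 2 # word_act d (Suc i # map Suc (rev [2..<i])) w"
proof -
  have "word_act d [1..<i] (Suc i # w) = Suc i # w"
    using assms by (intro word_act_Cons_fixed) (auto simp: nxt_less)
  moreover have "nxt d i = Suc i" using assms by (simp add: nxt_less)
  moreover have "word_act d (rev [2..<i]) (i # v) = 2 # word_act d (map Suc (rev [2..<i])) v" for v
    using assms by (intro word_act_rev_upt_Cons) auto
  ultimately show ?thesis unfolding h_word_def by simp
qed

lemma h_word_Cons_2:
  assumes "2 \<le> i" "i < d"
  shows "word_act d (h_word i) (2 # w) = 1 # word_act d [2] w"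
proof -
  have "[1..<i] = 1 # [2..<i]" using assms by (simp add: upt_conv_Cons numeral_2_eq_2)
  moreover have "nxt d 1 = 2" using assms by (simp add: nxt_less)
  moreover have "nxt d i = Suc i" using assms by (simp add: nxt_less)
  moreover have "word_act d [2..<i] (1 # v) = 1 # v" "word_act d (rev [2..<i]) (1 # v) = 1 # v" for v
    using assms by (intro word_act_Cons_fixed; auto simp: nxt_less)+
  ultimately show ?thesis unfolding h_word_def using assms by simp
qed

lemma h_word_Suc:
  assumes "2 \<le> i"
  shows "h_word (Suc i) = [1..<Suc i] @ (Suc i # map Suc (rev [2..<i])) @ [2]"
proof -
  have "map Suc (rev [2..<i]) @ [2] = rev [2..<Suc i]"
    using assms by (simp add: rev_map[symmetric] map_Suc_upt upt_conv_Cons)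
  then show ?thesis unfolding h_word_def by simp
qed

lemma nontrivial_powers_below_h_word_of_Suc:
  assumes i: "2 \<le> i" "i < d" and "nontrivial_powers_below d (word_act d (h_word (Suc i))) L"
  shows "nontrivial_powers_below d (word_act d (h_word i)) (3 * L)"
proof (rule nontrivial_powers_below_section[where x = 1])
  let ?g = "word_act d (h_word i)"
  fix w
  have "(?g ^^ 3) (1 # w) = ?g (?g (?g (1 # w)))" by (simp add: numeral_eq_Suc)
  also have "\<dots> = 1 # word_act d (h_word (Suc i)) w"
    by (simp only: h_word_Cons_1[OF i] h_word_Cons_Suc[OF i] h_word_Cons_2[OF i]
        word_act_append h_word_Suc[OF i(1)])
  finally show "(?g ^^ 3) (1 # w) = 1 # word_act d (h_word (Suc i)) w" .
  fix j :: nat and w'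
  assume "0 < j" "j < 3"
  then have "j = 1 \<or> j = 2" by auto
  then show "(?g ^^ j) (1 # w) \<noteq> 1 # w'"
  proof
    assume "j = 2"
    then have "(?g ^^ j) (1 # w) = ?g (?g (1 # w))" by (simp add: numeral_eq_Suc)
    also have "\<dots> = 2 # word_act d (Suc i # map Suc (rev [2..<i])) (word_act d [1..<Suc i] w)"
      by (simp only: h_word_Cons_1[OF i] h_word_Cons_Suc[OF i])
    finally show ?thesis by simp
  qed (use h_word_Cons_1[OF i, of w] i in simp)
qed (use assms in auto)

lemma nontrivial_powers_below_h_word_of_le:
  assumes "2 \<le> i" "i \<le> j" "j \<le> d" "nontrivial_powers_below d (word_act d (h_word j)) L"
  shows "nontrivial_powers_below d (word_act d (h_word i)) L"
  using assms(2-4)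
proof (induction j rule: dec_induct)
  case (step j)
  then have "nontrivial_powers_below d (word_act d (h_word j)) (3 * L)"
    using assms(1) by (intro nontrivial_powers_below_h_word_of_Suc) auto
  then have "nontrivial_powers_below d (word_act d (h_word j)) L"
    by (rule nontrivial_powers_below_mono) simp
  then show ?case using step by simp
qed simp

lemma nontrivial_powers_below_h_word_1_of_h_word_2:
  assumes "3 \<le> d" "nontrivial_powers_below d (word_act d (h_word 2)) L"
  shows "nontrivial_powers_below d (word_act d (h_word 1)) (2 * L)"
proof (rule nontrivial_powers_below_section[where x = 1])
  have words: "h_word 1 = [1]" "h_word 2 = [1, 2]"
    by (simp_all add: h_word_def numeral_2_eq_2)
  have "nxt d 1 = 2" using assms by (simp add: nxt_less)
  then have a1: "word_act d (h_word 1) (1 # w) = 2 # word_act d [1] w"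
    and a2: "word_act d (h_word 1) (2 # w) = 1 # word_act d [2] w" for w
    unfolding words by simp_all
  show "(word_act d (h_word 1) ^^ 2) (1 # w) = 1 # word_act d (h_word 2) w" for w
  proof -
    have "(word_act d (h_word 1) ^^ 2) (1 # w) =
        word_act d (h_word 1) (word_act d (h_word 1) (1 # w))"
      by (simp add: numeral_2_eq_2)
    also have "\<dots> = 1 # word_act d (h_word 2) w" by (simp only: a1 a2) (simp add: words)
    finally show ?thesis .
  qed
  show "(word_act d (h_word 1) ^^ j) (1 # w) \<noteq> 1 # w'" if "0 < j" "j < 2" for j w w'
  proof -
    have "j = 1" using that by simp
    then have "(word_act d (h_word 1) ^^ j) (1 # w) = word_act d (h_word 1) (1 # w)" by simp
    then show ?thesis by (simp only: a1) simp
  qed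
qed (use assms in auto)

lemma nontrivial_powers_below_h_word_d_of_a3_a2:
  assumes d: "3 \<le> d" and "nontrivial_powers_below d (word_act d [3, 2]) L"
  shows "nontrivial_powers_below d (word_act d (h_word d)) L"
proof -
  have "word_act d (h_word d) (3 # w) = 3 # word_act d [3, 2] w" for w
  proof -
    have "[1..<d] = 1 # 2 # [3..<d]" "rev [2..<d] = rev [3..<d] @ [2]"
      using d by (simp_all add: upt_conv_Cons numeral_2_eq_2 numeral_3_eq_3)
    moreover have "nxt d 1 = 2" "nxt d 2 = 3" "nxt d d = 1"
      using d by (simp_all add: nxt_less) (simp add: nxt_def)
    moreover have "word_act d [3..<d] (2 # v) = 2 # v" "word_act d (rev [3..<d]) (2 # v) = 2 # v"
      for v
      using d by (intro word_act_Cons_fixed; auto simp: nxt_less)+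
    ultimately show ?thesis unfolding h_word_def using d by simp
  qed
  then have "nontrivial_powers_below d (word_act d (h_word d)) (1 * L)"
    using assms by (intro nontrivial_powers_below_section[where x = 3]) auto
  then show ?thesis by simp
qed

lemma nontrivial_powers_below_a3_a2_of_rotated_h_word_3:
  assumes d: "3 \<le> d" and "nontrivial_powers_below d (word_act d (map (nxt d) (h_word 3))) L"
  shows "nontrivial_powers_below d (word_act d [3, 2]) (3 * L)"
proof (rule nontrivial_powers_below_section[where x = 2])
  define m where "m = nxt d 3" \<comment> \<open>4, or 1 when d = 3\<close>
  have n: "nxt d 1 = 2" "nxt d 2 = 3" "m \<noteq> 2" "m \<noteq> 3"
    using d nxt_eq[of 3 d] by (simp_all add: nxt_less m_def)
  let ?g = "word_act d [3, 2]"
  have g2: "?g (2 # w) = 3 # word_act d [2] w" for w using n by (simp add: m_def[symmetric])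
  have g3: "?g (3 # w) = m # word_act d [3] w" for w using n by (simp add: m_def[symmetric])
  have gm: "?g (m # w) = 2 # word_act d [m, 3] w" for w using n by (simp add: m_def[symmetric])
  have "map (nxt d) (h_word 3) = [2, 3, m, 3]"
    using n by (simp add: h_word_def numeral_3_eq_3 numeral_2_eq_2 m_def)
  moreover have "(?g ^^ 3) (2 # w) = ?g (?g (?g (2 # w)))" for w
    by (simp only: numeral_3_eq_3 funpow.simps comp_apply id_apply)
  ultimately show "(?g ^^ 3) (2 # w) = 2 # word_act d (map (nxt d) (h_word 3)) w" for w
    by (simp only: g2 g3 gm) simp
  show "(?g ^^ j) (2 # w) \<noteq> 2 # w'" if "0 < j" "j < 3" for j w w'
  proof -
    have "j = 1 \<or> j = 2" using that by auto
    then consider "j = 1" | "j = 2" by blast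
    then show ?thesis
    proof cases
      case 2
      then have "(?g ^^ j) (2 # w) = ?g (?g (2 # w))" by (simp add: numeral_2_eq_2)
      then show ?thesis using n by (simp only: g2 g3) simp
    next
      case 1
      then have "(?g ^^ j) (2 # w) = ?g (2 # w)" by simp
      then show ?thesis by (simp only: g2) simp
    qed
  qed
qed (use assms in auto)

lemma nontrivial_powers_below_h_word_d_of_h_word_3:
  assumes d: "3 \<le> d" and "nontrivial_powers_below d (word_act d (h_word 3)) L"
  shows "nontrivial_powers_below d (word_act d (h_word d)) (3 * L)"
proof -
  have "h_word 3 = [1, 2, 3, 2]" by (simp add: h_word_def numeral_3_eq_3 numeral_2_eq_2)
  then have "h_word 3 \<in> lists {1..d}" using d by simp
  moreover have "1 \<le> d" using d by simp
  ultimately have "nontrivial_powers_below d (word_act d (map (nxt d) (h_word 3))) L"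
    using nontrivial_powers_below_map_nxt assms(2) by blast
  then have "nontrivial_powers_below d (word_act d [3, 2]) (3 * L)"
    by (rule nontrivial_powers_below_a3_a2_of_rotated_h_word_3[OF d])
  then show ?thesis by (rule nontrivial_powers_below_h_word_d_of_a3_a2[OF d])
qed

lemma nontrivial_powers_below_h_word_d:
  assumes d: "3 \<le> d"
  shows "nontrivial_powers_below d (word_act d (h_word d)) L"
proof -
  have h3: "nontrivial_powers_below d (word_act d (h_word 3)) (3 ^ k)" for k
  proof (induction k)
    case 0
    show ?case using nontrivial_powers_below_1 by simp
  next
    case (Suc k)
    then have "nontrivial_powers_below d (word_act d (h_word d)) (3 * 3 ^ k)"
      by (rule nontrivial_powers_below_h_word_d_of_h_word_3[OF d])
    then show ?case using nontrivial_powers_below_h_word_of_le[OF _ d order_refl] by simp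
  qed
  have "L \<le> 3 ^ L"
    using less_exp[of L] power_mono[of "2::nat" 3 L] by linarith
  then have "nontrivial_powers_below d (word_act d (h_word 3)) L"
    using h3 nontrivial_powers_below_mono by blast
  then have "nontrivial_powers_below d (word_act d (h_word d)) (3 * L)"
    by (rule nontrivial_powers_below_h_word_d_of_h_word_3[OF d])
  then show ?thesis by (rule nontrivial_powers_below_mono) simp
qed

theorem lemma3p5:
  fixes d i :: nat
  assumes "d \<ge> 3" and "1 \<le> i" and "i \<le> d"
  shows "infinite_order d (word_act d (h_word i))"
  unfolding infinite_order_iff_nontrivial_powers_below
proof
  fix L
  have h: "nontrivial_powers_below d (word_act d (h_word j)) L" if "2 \<le> j" "j \<le> d" for j
    using nontrivial_powers_below_h_word_of_le[OF that(1,2) order_refl]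
      nontrivial_powers_below_h_word_d[OF assms(1)] .
  show "nontrivial_powers_below d (word_act d (h_word i)) L"
  proof (cases "i = 1")
    case True
    have "nontrivial_powers_below d (word_act d (h_word 1)) (2 * L)"
      using assms(1) h[of 2] by (intro nontrivial_powers_below_h_word_1_of_h_word_2) simp_all
    then show ?thesis using True by (auto elim: nontrivial_powers_below_mono)
  qed (use assms h in simp)
qed

end
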